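(* Let $d,\ell$ be positive integers and let $\Gamma=B(d,\ell)$ be the De Bruijn digraph. Fix $x_1,\ldots,x_{\ell-1}\in\mathbb{Z}_d$, not all equal, and let $X=\{x_1x_2\ldots x_{\ell-1}k : k\in\mathbb{Z}_d\}$. For each $j\in\mathbb{Z}_d$ let $\alpha_j$ be a permutation of $\mathbb{Z}_d=\{0,1,\ldots,d-1\}$. Let $\Gamma'=B'(d,\ell)$ be the digraph obtained from $\Gamma$ by changing the out-going arcs of the vertices of $X$ (all other arcs unchanged) so that every vertex $x_1x_2\ldots x_{\ell-1}k\in X$ is adjacent exactly to the $d$ vertices $$x_2x_3\ldots x_{\ell-1}\,\alpha_j(k)\,j,\qquad j=0,1,\ldots,d-1.$$ Then $\Gamma'$ is a $d$-regular digraph with diameter $\ell$ (the same as that of $B(d,\ell)$), and it is $\ell$-reachable.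
   Context: The De Bruijn digraph $B(d,\ell)$ has as vertices all words $a_1a_2\ldots a_\ell$ of length $\ell$ over the alphabet $\mathbb{Z}_d=\{0,1,\ldots,d-1\}$, and there is an arc from $a_1\ldots a_\ell$ to $b_1\ldots b_\ell$ if and only if $a_2\ldots a_\ell=b_1\ldots b_{\ell-1}$ (loops allowed). A digraph is $d$-regular if every vertex has in-degree and out-degree $d$. A digraph with diameter $D$ is $\ell$-reachable if $\ell$ is the smallest integer $m\ge D$ such that for every ordered pair of vertices $u,v$ there is a walk of length exactly $m$ from $u$ to $v$. *)

theory Defs
  imports Main
begin

text \<open>Digraphs are given by a vertex set V and an arc relation A (a subset of V x V).
  Walks of length exactly m from u to v correspond to (u,v) in A ^^ m.\<close>

definition debruijn_vertices :: "nat \<Rightarrow> nat \<Rightarrow> nat list set" where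
  "debruijn_vertices d l = {w. length w = l \<and> set w \<subseteq> {..<d}}"

definition debruijn_arcs :: "nat \<Rightarrow> nat \<Rightarrow> (nat list \<times> nat list) set" where
  "debruijn_arcs d l = {(a, b). a \<in> debruijn_vertices d l \<and> b \<in> debruijn_vertices d l
                                 \<and> tl a = butlast b}"

definition modX :: "nat \<Rightarrow> nat list \<Rightarrow> nat list set" where
  "modX d xs = {xs @ [k] | k. k < d}"

definition modified_debruijn_arcs ::
  "nat \<Rightarrow> nat \<Rightarrow> nat list \<Rightarrow> (nat \<Rightarrow> nat \<Rightarrow> nat) \<Rightarrow> (nat list \<times> nat list) set" where
  "modified_debruijn_arcs d l xs \<alpha> =
     {(a, b). (a, b) \<in> debruijn_arcs d l \<and> a \<notin> modX d xs}
     \<union> {(xs @ [k], tl xs @ [\<alpha> j k, j]) | k j. k < d \<and> j < d}"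

definition d_regular :: "'a set \<Rightarrow> ('a \<times> 'a) set \<Rightarrow> nat \<Rightarrow> bool" where
  "d_regular V A d \<longleftrightarrow>
     (\<forall>v\<in>V. card {w. (v, w) \<in> A} = d \<and> card {u. (u, v) \<in> A} = d)"

definition has_diameter :: "'a set \<Rightarrow> ('a \<times> 'a) set \<Rightarrow> nat \<Rightarrow> bool" where
  "has_diameter V A D \<longleftrightarrow>
     (\<forall>u\<in>V. \<forall>v\<in>V. \<exists>m\<le>D. (u, v) \<in> A ^^ m)
     \<and> (\<exists>u\<in>V. \<exists>v\<in>V. \<forall>m<D. (u, v) \<notin> A ^^ m)"

definition all_pairs_walk :: "'a set \<Rightarrow> ('a \<times> 'a) set \<Rightarrow> nat \<Rightarrow> bool" where
  "all_pairs_walk V A m \<longleftrightarrow> (\<forall>u\<in>V. \<forall>v\<in>V. (u, v) \<in> A ^^ m)"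

definition reachable_exactly :: "'a set \<Rightarrow> ('a \<times> 'a) set \<Rightarrow> nat \<Rightarrow> bool" where
  "reachable_exactly V A l \<longleftrightarrow>
     (\<exists>D. has_diameter V A D \<and> D \<le> l \<and> all_pairs_walk V A l
          \<and> (\<forall>m. D \<le> m \<and> m < l \<longrightarrow> \<not> all_pairs_walk V A m))"

end

theory Submission
  imports Defs
begin

text \<open>
  Every arc, redirected or not, moves the first \<open>l - 2\<close> letters of a word one place to
  the left. As \<open>xs\<close> is not constant, \<open>replicate l 0\<close> is not in \<open>X\<close>, so after its first
  arc \<open>l - 1\<close> zeros remain, and every walk of length \<open>m < l\<close> from it ends in a word that
  still starts with \<open>0\<close>; thus \<open>replicate l 1\<close> is at distance \<open>l\<close>.

  For walks of length exactly \<open>l\<close>: if all words \<open>q @ [e]\<close> (with \<open>length q = l - 1\<close>) are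
  reachable in \<open>i\<close> steps, then all \<open>tl q @ [a, e]\<close> are reachable in \<open>i + 1\<close> steps,
  directly if \<open>q \<noteq> xs\<close>, and through \<open>xs @ [k]\<close> with \<open>\<alpha> e k = a\<close> if \<open>q = xs\<close>. Starting
  from \<open>u \<notin> X\<close>, this writes any target letter by letter in \<open>l\<close> steps. From \<open>u \<in> X\<close>
  one first takes the redirected arc whose last letter is the first letter of the target;
  it leaves \<open>X\<close> because \<open>tl xs @ [y] \<noteq> xs\<close>, and \<open>l - 1\<close> further steps suffice.

  The De Bruijn digraph itself is the case where every \<open>\<alpha> j\<close> is the identity.
\<close>

lemma tl_snoc_eq_imp_replicate: "tl xs @ [a] = xs \<Longrightarrow> xs = replicate (length xs) a"
proof (induction xs)
  case (Cons x ys)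
  show ?case
  proof (cases ys)
    case Nil
    then show ?thesis using Cons.prems by simp
  next
    case (Cons y zs)
    then have "tl ys @ [a] = ys" and "x = y" using Cons.prems by simp_all
    with Cons.IH show ?thesis by (metis \<open>ys = y # zs\<close> length_Cons list.inject replicate_Suc)
  qed
qed simp

lemma butlast_replicate: "butlast (replicate n c) = replicate (n - 1) c"
  by (cases n) (simp_all flip: replicate_append_same)

lemma butlast_butlast_append_last2:
  assumes "butlast v \<noteq> []"
  shows "butlast (butlast v) @ [last (butlast v), last v] = v"
proof -
  have "butlast (butlast v) @ [last (butlast v), last v]
      = (butlast (butlast v) @ [last (butlast v)]) @ [last v]" by simp
  also have "\<dots> = butlast v @ [last v]" using assms by simp
  also have "\<dots> = v" using assms by (cases v) auto
  finally show ?thesis .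
qed

lemma set_tl_subset: "set w \<subseteq> S \<Longrightarrow> set (tl w) \<subseteq> S"
  by (cases w) auto

lemma relpow_take_tl_shift:
  assumes shift: "\<And>a b. (a, b) \<in> R \<Longrightarrow> take p b = take p (tl a)"
  shows "(a, b) \<in> R ^^ m \<Longrightarrow> m \<le> Suc p \<Longrightarrow> take (Suc p - m) b = take (Suc p - m) (drop m a)"
proof (induction m arbitrary: b)
  case (Suc m)
  then obtain c where ac: "(a, c) \<in> R ^^ m" and cb: "(c, b) \<in> R" by auto
  have "take (p - m) b = take (p - m) (take p b)" by simp
  also have "\<dots> = take (p - m) (tl c)" using shift[OF cb] by simp
  also have "\<dots> = tl (take (Suc p - m) c)" using Suc.prems(2) by (simp add: take_tl Suc_diff_le)
  also have "\<dots> = tl (take (Suc p - m) (drop m a))" using Suc.IH[OF ac] Suc.prems(2) by simp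
  also have "\<dots> = take (p - m) (drop (Suc m) a)"
    using Suc.prems(2) by (simp add: Suc_diff_le drop_Suc tl_drop flip: take_tl)
  finally show ?case by simp
qed simp

lemma relpow_replicate_no_short_walk:
  assumes shift: "\<And>a b. (a, b) \<in> R \<Longrightarrow> take (l - 2) b = take (l - 2) (tl a)"
    and first: "\<And>b. (replicate l c, b) \<in> R \<Longrightarrow> take (l - 1) b = replicate (l - 1) c"
    and "c \<noteq> c'" and "m < l"
  shows "(replicate l c, replicate l c') \<notin> R ^^ m"
proof
  assume walk: "(replicate l c, replicate l c') \<in> R ^^ m"
  show False
  proof (cases m)
    case 0
    then show False using walk \<open>c \<noteq> c'\<close> \<open>m < l\<close> by simp
  next
    case (Suc n)
    with walk have "(replicate l c, replicate l c') \<in> R ^^ Suc n" by simp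
    then obtain b where b: "(replicate l c, b) \<in> R" "(b, replicate l c') \<in> R ^^ n"
      by (blast dest: relpow_Suc_D2)
    have n: "n \<le> Suc (l - 2)" "Suc (l - 2) - n = l - 1 - n" "n < l - 1"
      using Suc \<open>m < l\<close> by auto
    have "replicate (l - 1 - n) c' = take (l - 1 - n) (drop n b)"
      using relpow_take_tl_shift[OF shift b(2) n(1)] n(2) by simp
    also have "\<dots> = drop n (take (l - 1) b)" using n(3) by (simp add: drop_take)
    also have "\<dots> = replicate (l - 1 - n) c" using first[OF b(1)] by simp
    finally show False using n(3) \<open>c \<noteq> c'\<close> by (cases "l - 1 - n") auto
  qed
qed

lemma card_image_inj_lessThan:
  "\<lbrakk>S = f ` {..<d}; inj_on f {..<d}\<rbrakk> \<Longrightarrow> card S = d"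
  by (simp add: card_image)

lemma debruijn_vertices_iff: "w \<in> debruijn_vertices d l \<longleftrightarrow> length w = l \<and> set w \<subseteq> {..<d}"
  by (simp add: debruijn_vertices_def)

locale modified_debruijn =
  fixes d l :: nat and xs :: "nat list" and \<alpha> :: "nat \<Rightarrow> nat \<Rightarrow> nat"
  assumes length_xs: "length xs = l - 1" and set_xs: "set xs \<subseteq> {..<d}"
    and xs_nonconstant: "\<exists>i<length xs. \<exists>j<length xs. xs ! i \<noteq> xs ! j"
    and bij_\<alpha>: "\<forall>j<d. bij_betw (\<alpha> j) {..<d} {..<d}"
begin

abbreviation "V \<equiv> debruijn_vertices d l"
abbreviation "A \<equiv> modified_debruijn_arcs d l xs \<alpha>"

lemma three_le_l: "3 \<le> l" and two_le_d: "2 \<le> d"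
proof -
  obtain i j where ij: "i < length xs" "j < length xs" "xs ! i \<noteq> xs ! j"
    using xs_nonconstant by blast
  then have "i \<noteq> j" by blast
  then show "3 \<le> l" using ij length_xs by linarith
  have "xs ! i < d" "xs ! j < d" using ij set_xs nth_mem by blast+
  then show "2 \<le> d" using ij(3) by linarith
qed

lemma xs_neq_replicate: "xs \<noteq> replicate n c"
proof
  assume "xs = replicate n c"
  moreover obtain i j where "i < length xs" "j < length xs" "xs ! i \<noteq> xs ! j"
    using xs_nonconstant by blast
  ultimately show False by simp
qed

lemma tl_xs_snoc_neq_xs: "tl xs @ [a] \<noteq> xs"
  using tl_snoc_eq_imp_replicate xs_neq_replicate by metis

lemma \<alpha>_less: "\<lbrakk>j < d; k < d\<rbrakk> \<Longrightarrow> \<alpha> j k < d"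
  using bij_\<alpha> by (meson bij_betw_apply lessThan_iff)

lemma \<alpha>_surj: "\<lbrakk>j < d; a < d\<rbrakk> \<Longrightarrow> \<exists>k<d. \<alpha> j k = a"
proof -
  assume "j < d" "a < d"
  then have "a \<in> \<alpha> j ` {..<d}" using bij_\<alpha> bij_betw_imp_surj_on by fastforce
  then show ?thesis by auto
qed

lemma \<alpha>_inj: "\<lbrakk>j < d; k < d; k' < d; \<alpha> j k = \<alpha> j k'\<rbrakk> \<Longrightarrow> k = k'"
  using bij_\<alpha> bij_betw_imp_inj_on unfolding inj_on_def by blast

lemma vertex_neq_Nil: "w \<in> V \<Longrightarrow> w \<noteq> []"
  using three_le_l by (auto simp: debruijn_vertices_iff)

lemma vertex_butlast_neq_Nil: "w \<in> V \<Longrightarrow> butlast w \<noteq> []"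
  using three_le_l by (auto simp: debruijn_vertices_iff dest: arg_cong[where f = length])

lemma vertex_last_less: "w \<in> V \<Longrightarrow> last w < d"
  using vertex_neq_Nil by (auto simp: debruijn_vertices_iff dest: last_in_set)

lemma modX_iff: "w \<in> V \<Longrightarrow> w \<in> modX d xs \<longleftrightarrow> butlast w = xs"
proof
  assume w: "w \<in> V" "butlast w = xs"
  have "w = butlast w @ [last w]" using vertex_neq_Nil[OF w(1)] by simp
  then have "w = xs @ [last w]" using w(2) by simp
  with vertex_last_less[OF w(1)] show "w \<in> modX d xs" unfolding modX_def by blast
qed (auto simp: modX_def)

lemma arcs_iff: "(a, b) \<in> A \<longleftrightarrow>
    (a \<in> V \<and> b \<in> V \<and> tl a = butlast b \<and> butlast a \<noteq> xs)
  \<or> (\<exists>k j. k < d \<and> j < d \<and> a = xs @ [k] \<and> b = tl xs @ [\<alpha> j k, j])"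
  unfolding modified_debruijn_arcs_def debruijn_arcs_def using modX_iff by auto

lemma redirected_target_in_V: "\<lbrakk>k < d; j < d\<rbrakk> \<Longrightarrow> tl xs @ [\<alpha> j k, j] \<in> V"
  using set_xs length_xs three_le_l \<alpha>_less set_tl_subset[where S = "{..<d}"]
  by (auto simp: debruijn_vertices_iff)

lemma redirected_arc: "\<lbrakk>k < d; j < d\<rbrakk> \<Longrightarrow> (xs @ [k], tl xs @ [\<alpha> j k, j]) \<in> A"
  unfolding modified_debruijn_arcs_def by blast

lemma shift_arc:
  "\<lbrakk>butlast a \<noteq> xs; length a = l; set a \<subseteq> {..<d}; e < d\<rbrakk> \<Longrightarrow> (a, tl a @ [e]) \<in> A"
  using three_le_l set_tl_subset[where S = "{..<d}"] by (auto simp: arcs_iff debruijn_vertices_iff)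

lemma out_degree: assumes v: "v \<in> V" shows "card {w. (v, w) \<in> A} = d"
proof (cases "butlast v = xs")
  case True
  then obtain k where k: "k < d" "v = xs @ [k]" using v modX_iff by (auto simp: modX_def)
  show ?thesis
  proof (rule card_image_inj_lessThan)
    show "{w. (v, w) \<in> A} = (\<lambda>j. tl xs @ [\<alpha> j k, j]) ` {..<d}"
      using k by (auto simp: arcs_iff)
  qed (simp add: inj_on_def)
next
  case False
  have lv: "length v = l" and sv: "set v \<subseteq> {..<d}" using v by (simp_all add: debruijn_vertices_iff)
  show ?thesis
  proof (rule card_image_inj_lessThan)
    show "{w. (v, w) \<in> A} = (\<lambda>j. tl v @ [j]) ` {..<d}"
    proof (intro equalityI subsetI)
      fix w assume "w \<in> {w. (v, w) \<in> A}"
      then have w: "w \<in> V" "tl v = butlast w" using False by (auto simp: arcs_iff)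
      then have "w = tl v @ [last w]" using vertex_neq_Nil by simp
      with vertex_last_less[OF w(1)] show "w \<in> (\<lambda>j. tl v @ [j]) ` {..<d}" by blast
    qed (use False shift_arc lv sv in auto)
  qed (simp add: inj_on_def)
qed

text \<open>The in-neighbour \<open>c # butlast v\<close> lying in \<open>X\<close> has lost its arc to \<open>v\<close>; its place is
  taken by the unique \<open>xs @ [k0]\<close> redirected onto \<open>v\<close>.\<close>

lemma in_neighbours:
  assumes v: "v \<in> V" and k0: "k0 < d" "\<alpha> (last v) k0 = last (butlast v)"
  shows "{u. (u, v) \<in> A} =
    (\<lambda>c. if butlast (c # butlast v) = xs then xs @ [k0] else c # butlast v) ` {..<d}"
    (is "_ = ?f ` _")
proof (intro equalityI subsetI)
  fix u assume "u \<in> {u. (u, v) \<in> A}"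
  then consider (redirected) k j where "k < d" "j < d" "u = xs @ [k]" "v = tl xs @ [\<alpha> j k, j]"
    | (shifted) "u \<in> V" "tl u = butlast v" "butlast u \<noteq> xs"
    by (auto simp: arcs_iff)
  then show "u \<in> ?f ` {..<d}"
  proof cases
    case redirected
    have "xs \<noteq> []" using length_xs three_le_l by auto
    then have "hd xs < d" using set_xs hd_in_set by blast
    have "butlast (hd xs # butlast v) = xs"
      using redirected(4) \<open>xs \<noteq> []\<close> by (simp add: butlast_append)
    moreover have "\<alpha> j k0 = \<alpha> j k" using redirected(4) k0(2) by (simp add: butlast_append)
    then have "k = k0" using redirected(1,2) k0(1) \<alpha>_inj by metis
    ultimately have "?f (hd xs) = u" using redirected by simp
    with \<open>hd xs < d\<close> show ?thesis by blast
  next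
    case shifted
    obtain c where u: "u = c # butlast v"
      using shifted(1,2) vertex_neq_Nil by (cases u) auto
    then have "c < d" using shifted(1) by (auto simp: debruijn_vertices_iff)
    moreover have "?f c = u" using shifted(3) u by simp
    ultimately show ?thesis by (intro rev_image_eqI[of c]) simp_all
  qed
next
  fix u assume "u \<in> ?f ` {..<d}"
  then obtain c where c: "c < d" "u = ?f c" by blast
  have "butlast v \<noteq> []" using v by (rule vertex_butlast_neq_Nil)
  show "u \<in> {u. (u, v) \<in> A}"
  proof (cases "butlast (c # butlast v) = xs")
    case True
    then have "tl xs = butlast (butlast v)" using \<open>butlast v \<noteq> []\<close> by auto
    then have "tl xs @ [\<alpha> (last v) k0, last v] = v"
      using k0 butlast_butlast_append_last2[OF \<open>butlast v \<noteq> []\<close>] by simp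
    moreover have "(xs @ [k0], tl xs @ [\<alpha> (last v) k0, last v]) \<in> A"
      using k0(1) vertex_last_less[OF v] unfolding arcs_iff by blast
    ultimately show ?thesis using True c by simp
  next
    case False
    have "c # butlast v \<in> V"
      using c v vertex_neq_Nil[OF v] by (auto simp: debruijn_vertices_iff dest: in_set_butlastD)
    then show ?thesis using False c v by (auto simp: arcs_iff)
  qed
qed

lemma in_degree: assumes v: "v \<in> V" shows "card {u. (u, v) \<in> A} = d"
proof -
  have "butlast v \<noteq> []" using v by (rule vertex_butlast_neq_Nil)
  then have "last (butlast v) < d"
    using v last_in_set in_set_butlastD by (fastforce simp: debruijn_vertices_iff)
  then obtain k0 where "k0 < d" "\<alpha> (last v) k0 = last (butlast v)"
    using \<alpha>_surj vertex_last_less[OF v] by blast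
  from in_neighbours[OF v this] show ?thesis
  proof (rule card_image_inj_lessThan)
    show "inj_on (\<lambda>c. if butlast (c # butlast v) = xs then xs @ [k0] else c # butlast v) {..<d}"
      using \<open>butlast v \<noteq> []\<close>
      by (rule_tac inj_onI) (auto split: if_splits dest: arg_cong[where f = hd])
  qed
qed

lemma d_regular: "d_regular V A d"
  unfolding d_regular_def using out_degree in_degree by blast

lemma extensions_reachable_shift:
  assumes q: "length q = l - 1" "set q \<subseteq> {..<d}" and reach: "\<forall>e<d. (u, q @ [e]) \<in> A ^^ i"
    and a: "a < d"
  shows "\<forall>e<d. (u, tl q @ [a, e]) \<in> A ^^ Suc i"
proof (intro allI impI)
  fix e assume e: "e < d"
  show "(u, tl q @ [a, e]) \<in> A ^^ Suc i"
  proof (cases "q = xs")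
    case True
    then obtain k where k: "k < d" "\<alpha> e k = a" using \<alpha>_surj e a by blast
    then have "(q @ [k], tl q @ [a, e]) \<in> A" using True e redirected_arc by blast
    then show ?thesis using True relpow_Suc_I[OF reach[rule_format, OF k(1)]] by simp
  next
    case False
    have "q \<noteq> []" using q three_le_l by auto
    then have "(q @ [a], tl q @ [a, e]) \<in> A"
      using shift_arc[of "q @ [a]" e] False q a e three_le_l by (simp add: tl_append2)
    then show ?thesis using relpow_Suc_I[OF reach[rule_format, OF a]] by simp
  qed
qed

lemma walks_from_unredirected:
  assumes u: "u \<in> V" "butlast u \<noteq> xs"
  shows "\<lbrakk>set p \<subseteq> {..<d}; length p \<le> l - 1\<rbrakk> \<Longrightarrow>
    \<forall>e<d. (u, drop (length p) (tl u) @ p @ [e]) \<in> A ^^ Suc (length p)"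
proof (induction p rule: rev_induct)
  case Nil
  then show ?case using u shift_arc by (simp add: debruijn_vertices_iff)
next
  case (snoc a p)
  let ?q = "drop (length p) (tl u) @ p"
  have q: "length ?q = l - 1" "set ?q \<subseteq> {..<d}"
    using u snoc.prems set_tl_subset[where S = "{..<d}"]
    by (auto simp: debruijn_vertices_iff dest: in_set_dropD)
  have "\<forall>e<d. (u, ?q @ [e]) \<in> A ^^ Suc (length p)" using snoc by simp
  moreover have "a < d" using snoc.prems by simp
  ultimately have "\<forall>e<d. (u, tl ?q @ [a, e]) \<in> A ^^ Suc (Suc (length p))"
    by (rule extensions_reachable_shift[OF q])
  moreover have "tl ?q = drop (length (p @ [a])) (tl u) @ p"
    using u snoc.prems by (simp add: debruijn_vertices_iff drop_Suc tl_drop)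
  ultimately show ?case by simp
qed

lemma walk_of_length_l: assumes u: "u \<in> V" and v: "v \<in> V" shows "(u, v) \<in> A ^^ l"
proof -
  have lv: "length v = l" and sv: "set v \<subseteq> {..<d}" using v by (auto simp: debruijn_vertices_iff)
  have sbv: "set (butlast v) \<subseteq> {..<d}" using sv by (auto dest: in_set_butlastD)
  have v_eq: "butlast v @ [last v] = v" using vertex_neq_Nil[OF v] by simp
  have l: "Suc (l - 1) = l" using three_le_l by simp
  show ?thesis
  proof (cases "butlast u = xs")
    case False
    have "drop (l - 1) (tl u) = []" using u by (simp add: debruijn_vertices_iff)
    then have "\<forall>e<d. (u, butlast v @ [e]) \<in> A ^^ l"
      using walks_from_unredirected[OF u False sbv] lv l by simp
    then show ?thesis using vertex_last_less[OF v] v_eq by metis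
  next
    case True
    then obtain k where k: "k < d" "u = xs @ [k]" using u modX_iff by (auto simp: modX_def)
    have hv: "hd v < d" using sv hd_in_set[OF vertex_neq_Nil[OF v]] by blast
    define w where "w = tl xs @ [\<alpha> (hd v) k, hd v]"
    have uw: "(u, w) \<in> A" using redirected_arc[OF k(1) hv] k(2) by (simp add: w_def)
    have w: "w \<in> V" "butlast w \<noteq> xs"
      using redirected_target_in_V[OF k(1) hv] tl_xs_snoc_neq_xs
      by (simp_all add: w_def butlast_append)
    have len: "Suc (l - 2) = Suc (length (tl xs))" using length_xs three_le_l by simp
    have "drop (l - 2) (tl w) = drop (Suc (l - 2)) w" by (simp only: drop_Suc)
    also have "\<dots> = [hd v]" unfolding len w_def by simp
    finally have "drop (l - 2) (tl w) = [hd v]" .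
    moreover have "set (tl (butlast v)) \<subseteq> {..<d}" using set_tl_subset[OF sbv] .
    moreover have "length (tl (butlast v)) = l - 2" using lv by simp
    ultimately have "\<forall>e<d. (w, hd v # tl (butlast v) @ [e]) \<in> A ^^ Suc (l - 2)"
      using walks_from_unredirected[OF w, of "tl (butlast v)"] by simp
    moreover have "hd v # tl (butlast v) @ [last v] = v"
      using lv three_le_l v_eq by (cases v) auto
    ultimately have "(w, v) \<in> A ^^ Suc (l - 2)" using vertex_last_less[OF v] by metis
    then have "(u, v) \<in> A ^^ Suc (Suc (l - 2))" by (rule relpow_Suc_I2[OF uw])
    then show ?thesis using three_le_l by (simp add: Suc_diff_Suc numeral_2_eq_2)
  qed
qed

lemma arc_shifts_prefix: "(a, b) \<in> A \<Longrightarrow> take (l - 2) b = take (l - 2) (tl a)"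
proof -
  have "xs \<noteq> []" "length (tl xs) = l - 2" using length_xs three_le_l by auto
  then show "(a, b) \<in> A \<Longrightarrow> ?thesis"
    by (auto simp: arcs_iff debruijn_vertices_iff butlast_conv_take)
qed

lemma arc_from_replicate: "(replicate l c, b) \<in> A \<Longrightarrow> take (l - 1) b = replicate (l - 1) c"
proof -
  assume arc: "(replicate l c, b) \<in> A"
  have "butlast (replicate l c) \<noteq> xs"
    using xs_neq_replicate[of "l - 1" c] by (simp add: butlast_replicate)
  moreover have "\<nexists>k. replicate l c = xs @ [k]"
    using calculation by (metis butlast_snoc)
  ultimately show ?thesis using arc by (auto simp: arcs_iff debruijn_vertices_iff butlast_conv_take)
qed

lemma has_diameter_l: "has_diameter V A l"
proof -
  have "replicate l 0 \<in> V" "replicate l 1 \<in> V" using two_le_d by (auto simp: debruijn_vertices_iff)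
  moreover have "\<forall>m<l. (replicate l 0, replicate l (1::nat)) \<notin> A ^^ m"
    using relpow_replicate_no_short_walk[OF arc_shifts_prefix arc_from_replicate] by simp
  ultimately show ?thesis unfolding has_diameter_def using walk_of_length_l by blast
qed

lemma reachable_exactly_l: "reachable_exactly V A l"
  unfolding reachable_exactly_def all_pairs_walk_def using has_diameter_l walk_of_length_l by auto

end

lemma debruijn_arcs_eq_identity_redirection:
  assumes "xs \<noteq> []" "length xs = l - 1" "set xs \<subseteq> {..<d}"
  shows "debruijn_arcs d l = modified_debruijn_arcs d l xs (\<lambda>j k. k)"
proof (intro equalityI subsetI)
  fix ab assume "ab \<in> debruijn_arcs d l"
  then obtain a b where ab: "ab = (a, b)" "a \<in> debruijn_vertices d l" "b \<in> debruijn_vertices d l"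
    "tl a = butlast b" unfolding debruijn_arcs_def by blast
  show "ab \<in> modified_debruijn_arcs d l xs (\<lambda>j k. k)"
  proof (cases "a \<in> modX d xs")
    case True
    then obtain k where k: "k < d" "a = xs @ [k]" unfolding modX_def by blast
    have "b \<noteq> []" using ab(3) assms by (auto simp: debruijn_vertices_iff)
    then have "b = tl xs @ [k, last b]" using ab(4) k(2) assms(1)
      by (metis append_butlast_last_id append_Cons append_Nil append_assoc tl_append2)
    moreover have "last b < d"
      using ab(3) \<open>b \<noteq> []\<close> last_in_set by (fastforce simp: debruijn_vertices_iff)
    ultimately show ?thesis using k ab(1) unfolding modified_debruijn_arcs_def by blast
  next
    case False
    then show ?thesis using ab unfolding modified_debruijn_arcs_def debruijn_arcs_def by blast
  qed
next
  fix ab assume "ab \<in> modified_debruijn_arcs d l xs (\<lambda>j k. k)"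
  moreover have "2 \<le> l" using assms(1,2) by (cases xs) auto
  ultimately show "ab \<in> debruijn_arcs d l"
    using assms by (auto simp: modified_debruijn_arcs_def debruijn_arcs_def debruijn_vertices_iff
        butlast_append dest: list.set_sel(2))
qed

theorem mainTheorem6:
  fixes d l :: nat and xs :: "nat list" and \<alpha> :: "nat \<Rightarrow> nat \<Rightarrow> nat"
  assumes "0 < d" and "0 < l"
    and "length xs = l - 1" and "set xs \<subseteq> {..<d}"
    and "\<exists>i<length xs. \<exists>j<length xs. xs ! i \<noteq> xs ! j"
    and "\<forall>j<d. bij_betw (\<alpha> j) {..<d} {..<d}"
  shows "d_regular (debruijn_vertices d l) (modified_debruijn_arcs d l xs \<alpha>) d
       \<and> has_diameter (debruijn_vertices d l) (modified_debruijn_arcs d l xs \<alpha>) l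
       \<and> has_diameter (debruijn_vertices d l) (debruijn_arcs d l) l
       \<and> reachable_exactly (debruijn_vertices d l) (modified_debruijn_arcs d l xs \<alpha>) l"
proof -
  interpret redirected: modified_debruijn d l xs \<alpha> using assms by unfold_locales
  interpret unredirected: modified_debruijn d l xs "\<lambda>j k. k"
    using assms by unfold_locales (auto simp: bij_betw_def)
  have "debruijn_arcs d l = modified_debruijn_arcs d l xs (\<lambda>j k. k)"
    using assms(3,4) redirected.three_le_l by (intro debruijn_arcs_eq_identity_redirection) auto
  then show ?thesis
    using redirected.d_regular redirected.has_diameter_l redirected.reachable_exactly_l
      unredirected.has_diameter_l by simp
qed

end
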